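(* Let $x_1,\dots,x_n,y_1,\dots,y_n\in\mathbb C$ and define the $n\times n$ matrix $M$ by $$\sum_{k=1}^nM_{jk}u^{k-1}=\prod_{1\le i<j}(u-x_i)\prod_{j<i\le n}(u+y_i),\qquad j=1,\dots,n.$$ Then $\det M=\prod_{1\le i<j\le n}(x_i+y_j)$. *)

theory Defs
  imports "HOL-Computational_Algebra.Polynomial" "Jordan_Normal_Form.Determinant"
begin

text \<open>Indices are 0-based: x i, y i for i < n correspond to x_{i+1}, y_{i+1}.\<close>

definition row_poly :: "nat \<Rightarrow> (nat \<Rightarrow> complex) \<Rightarrow> (nat \<Rightarrow> complex) \<Rightarrow> nat \<Rightarrow> complex poly" where
  "row_poly n x y j = (\<Prod>i<j. [:- x i, 1:]) * (\<Prod>i\<in>{j<..<n}. [:y i, 1:])"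

definition M_mat :: "nat \<Rightarrow> (nat \<Rightarrow> complex) \<Rightarrow> (nat \<Rightarrow> complex) \<Rightarrow> complex mat" where
  "M_mat n x y = mat n n (\<lambda>(j, k). coeff (row_poly n x y j) k)"

end

theory Submission imports Defs begin

text \<open>In the matrix of size n + 1, row j minus row j + 1 equals (x j + y (j + 1)) times row j
  of the matrix of size n built from x and the shifted sequence y (i + 1), because the two row
  polynomials share all factors except (u + y (j + 1)) versus (u - x j). After these row operations,
  which do not change the determinant, every row but the last has degree below n, while the last
  row is monic of degree n; so the last column is a unit vector, and expanding along it gives
  det M = (\<Prod>i<n. x i + y (i + 1)) * det M', whence the product formula by induction on n.\<close>

lemma degree_row_poly:
  assumes "j < n"
  shows "degree (row_poly n x y j) = n - 1"
proof -
  have "degree (\<Prod>i<j. [:- x i, 1:]) = j"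
    by (subst degree_prod_eq_sum_degree) auto
  moreover have "degree (\<Prod>i\<in>{j<..<n}. [:y i, 1:]) = n - Suc j"
    by (subst degree_prod_eq_sum_degree) auto
  ultimately show ?thesis
    using assms unfolding row_poly_def by (subst degree_mult_eq) auto
qed

lemma coeff_row_poly_eq_0: "j < n \<Longrightarrow> coeff (row_poly n x y j) n = 0"
  by (rule coeff_eq_0) (simp add: degree_row_poly)

lemma row_poly_last: "row_poly (Suc n) x y n = (\<Prod>i<n. [:- x i, 1:])"
  unfolding row_poly_def by (simp add: greaterThanLessThan_upt)

lemma coeff_row_poly_last: "coeff (row_poly (Suc n) x y n) n = 1"
proof -
  have "lead_coeff (row_poly (Suc n) x y n) = 1"
    by (simp add: row_poly_last lead_coeff_prod)
  then show ?thesis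
    using degree_row_poly[of n "Suc n" x y] by simp
qed

lemma row_poly_diff:
  assumes "j < n"
  shows "row_poly (Suc n) x y j - row_poly (Suc n) x y (Suc j)
    = smult (x j + y (Suc j)) (row_poly n x (\<lambda>i. y (Suc i)) j)"
proof -
  define A where "A = (\<Prod>i<j. [:- x i, 1:])"
  define B where "B = (\<Prod>i\<in>{Suc j<..<Suc n}. [:y i, 1:])"
  have "{j<..<Suc n} = insert (Suc j) {Suc j<..<Suc n}"
    using assms by auto
  then have "row_poly (Suc n) x y j = A * B * [:y (Suc j), 1:]"
    unfolding row_poly_def A_def B_def by (simp add: ac_simps del: mult_pCons_left)
  moreover have "row_poly (Suc n) x y (Suc j) = A * B * [:- x j, 1:]"
    unfolding row_poly_def A_def B_def by (simp add: ac_simps del: mult_pCons_left mult_pCons_right)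
  moreover have "row_poly n x (\<lambda>i. y (Suc i)) j = A * B"
    unfolding row_poly_def A_def B_def atLeastSucLessThan_greaterThanLessThan [symmetric]
    by (simp only: prod.shift_bounds_Suc_ivl)
  moreover have "A * B * [:y (Suc j), 1:] - A * B * [:- x j, 1:] = smult (x j + y (Suc j)) (A * B)"
    by (simp only: right_diff_distrib' [symmetric]) (simp add: add.commute)
  ultimately show ?thesis
    by simp
qed

definition successive_row_diff :: "'a :: ring_1 mat \<Rightarrow> 'a mat" where
  "successive_row_diff A = mat (dim_row A) (dim_col A) (\<lambda>(i, k).
     if Suc i < dim_row A then A $$ (i, k) - A $$ (Suc i, k) else A $$ (i, k))"

lemma successive_row_diff_dim [simp]:
  "dim_row (successive_row_diff A) = dim_row A"
  "dim_col (successive_row_diff A) = dim_col A"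
  unfolding successive_row_diff_def by simp_all

lemma successive_row_diff_carrier:
  "A \<in> carrier_mat m n \<Longrightarrow> successive_row_diff A \<in> carrier_mat m n"
  unfolding successive_row_diff_def by simp

lemma index_successive_row_diff:
  "i < dim_row A \<Longrightarrow> k < dim_col A \<Longrightarrow> successive_row_diff A $$ (i, k) =
    (if Suc i < dim_row A then A $$ (i, k) - A $$ (Suc i, k) else A $$ (i, k))"
  unfolding successive_row_diff_def by simp

lemma det_successive_row_diff:
  fixes A :: "'a :: comm_ring_1 mat"
  assumes A: "A \<in> carrier_mat n n"
  shows "det (successive_row_diff A) = det A"
proof -
  define D :: "'a mat" where
    "D = mat n n (\<lambda>(i, l). if l = i then 1 else if l = Suc i then - 1 else 0)"
  have D: "D \<in> carrier_mat n n"
    unfolding D_def by simp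
  have "successive_row_diff A = D * A"
  proof (rule eq_matI)
    fix i k assume "i < dim_row (D * A)" "k < dim_col (D * A)"
    with A D have i: "i < n" and k: "k < n" by auto
    have "(D * A) $$ (i, k) = (\<Sum>l<n. (if l = i then A $$ (l, k) else 0)
        - (if l = Suc i then A $$ (l, k) else 0))"
      using A i k unfolding D_def
      by (auto simp: scalar_prod_def atLeast0LessThan intro!: sum.cong)
    also have "\<dots> = successive_row_diff A $$ (i, k)"
      using A i k by (simp add: index_successive_row_diff sum_subtractf)
    finally show "successive_row_diff A $$ (i, k) = (D * A) $$ (i, k)" ..
  qed (use A D in auto)
  moreover have "det D = 1"
  proof -
    have "upper_triangular D"
      unfolding D_def upper_triangular_def by auto
    then have "det D = prod_list (diag_mat D)"
      using D by (rule det_upper_triangular)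
    then show ?thesis
      by (simp add: prod_list_diag_prod D_def)
  qed
  ultimately show ?thesis
    using det_mult[OF D A] by simp
qed

lemma det_unit_last_column:
  fixes A :: "'a :: comm_ring_1 mat"
  assumes A: "A \<in> carrier_mat (Suc n) (Suc n)"
    and above: "\<And>i. i < n \<Longrightarrow> A $$ (i, n) = 0" and diag: "A $$ (n, n) = 1"
  shows "det A = det (mat_delete A n n)"
proof -
  have "det A = (\<Sum>i<Suc n. A $$ (i, n) * cofactor A i n)"
    using A by (rule laplace_expansion_column) simp
  also have "\<dots> = A $$ (n, n) * cofactor A n n"
    using above by simp
  also have "\<dots> = det (mat_delete A n n)"
    using diag by (simp add: cofactor_def)
  finally show ?thesis .
qed

lemma det_scale_rows:
  fixes B :: "'a :: comm_ring_1 mat"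
  assumes B: "B \<in> carrier_mat n n"
  shows "det (mat n n (\<lambda>(i, k). c i * B $$ (i, k))) = prod c {0..<n} * det B"
proof -
  have "mat n n (\<lambda>(i, k). c i * B $$ (i, k)) = mat\<^sub>r n n (\<lambda>i. c i \<cdot>\<^sub>v row B i)"
    by (rule eq_matI) (use B in auto)
  moreover have "mat\<^sub>r n n (\<lambda>i. row B i) = B"
    by (rule eq_matI) (use B in auto)
  ultimately show ?thesis
    using B det_rows_mul[of "\<lambda>i. row B i" n c] by auto
qed

lemma M_mat_dim [simp]: "dim_row (M_mat n x y) = n" "dim_col (M_mat n x y) = n"
  unfolding M_mat_def by simp_all

lemma M_mat_carrier: "M_mat n x y \<in> carrier_mat n n"
  unfolding M_mat_def by simp

lemma index_M_mat: "j < n \<Longrightarrow> k < n \<Longrightarrow> M_mat n x y $$ (j, k) = coeff (row_poly n x y j) k"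
  unfolding M_mat_def by simp

lemma det_M_mat_Suc:
  "det (M_mat (Suc n) x y) = (\<Prod>i<n. x i + y (Suc i)) * det (M_mat n x (\<lambda>i. y (Suc i)))"
proof -
  let ?N = "successive_row_diff (M_mat (Suc n) x y)"
  let ?M' = "M_mat n x (\<lambda>i. y (Suc i))"
  have N: "?N \<in> carrier_mat (Suc n) (Suc n)"
    by (rule successive_row_diff_carrier[OF M_mat_carrier])
  have upper: "?N $$ (i, k) = (x i + y (Suc i)) * coeff (row_poly n x (\<lambda>i. y (Suc i)) i) k"
    if "i < n" "k < Suc n" for i k
    using that row_poly_diff[OF \<open>i < n\<close>, of x y]
    by (simp add: index_successive_row_diff index_M_mat flip: coeff_diff)
  have last: "?N $$ (n, k) = coeff (row_poly (Suc n) x y n) k" if "k < Suc n" for k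
    using that by (simp add: index_successive_row_diff index_M_mat)
  have rows_scaled: "mat_delete ?N n n = mat n n (\<lambda>(i, k). (x i + y (Suc i)) * ?M' $$ (i, k))"
    using upper by (intro eq_matI) (simp_all add: mat_delete_def index_M_mat)
  have "det (M_mat (Suc n) x y) = det ?N"
    using det_successive_row_diff[OF M_mat_carrier] by simp
  also have "\<dots> = det (mat_delete ?N n n)"
    using N by (rule det_unit_last_column) (simp_all add: upper last coeff_row_poly_eq_0 coeff_row_poly_last)
  also have "\<dots> = (\<Prod>i<n. x i + y (Suc i)) * det ?M'"
    unfolding rows_scaled by (simp add: det_scale_rows M_mat_carrier atLeast0LessThan)
  finally show ?thesis .
qed

lemma prod_triangle_Suc:
  fixes f :: "nat \<Rightarrow> nat \<Rightarrow> 'a::comm_monoid_mult"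
  shows "(\<Prod>j<Suc n. \<Prod>i<j. f i j) = (\<Prod>i<n. f i (Suc i)) * (\<Prod>j<n. \<Prod>i<j. f i (Suc j))"
proof -
  have "(\<Prod>j<Suc n. \<Prod>i<j. f i j) = (\<Prod>j<n. \<Prod>i<Suc j. f i (Suc j))"
    by (subst prod.lessThan_Suc_shift) simp
  also have "\<dots> = (\<Prod>j<n. f j (Suc j) * (\<Prod>i<j. f i (Suc j)))"
    by (simp add: mult.commute)
  also have "\<dots> = (\<Prod>i<n. f i (Suc i)) * (\<Prod>j<n. \<Prod>i<j. f i (Suc j))"
    by (rule prod.distrib)
  finally show ?thesis .
qed

theorem lemma5p2:
  fixes n :: nat and x y :: "nat \<Rightarrow> complex"
  shows "det (M_mat n x y) = (\<Prod>j<n. \<Prod>i<j. x i + y j)"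
proof (induction n arbitrary: y)
  case 0
  show ?case
    using M_mat_carrier[of 0 x y] by simp
next
  case (Suc n)
  show ?case
    by (simp only: det_M_mat_Suc Suc.IH prod_triangle_Suc)
qed

end
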